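(* Let $0<c<1/2$, and for integers $j\ge0$ set $c_j=c+c^2+\dots+c^j$ (so $c_0=0$). Then for every $B\in\mathcal F$ and every integer $m$ with $0\le m\le k:=\mu(B)$, $$g(m,B)\le 2c_1+2c_2+\dots+2c_{m-1}+c_m+c_m\,c_{k-m},$$ where $g(m,B)=\sum_{i\in\mathrm{OPT}^m_{\mathrm{large}}(B)}\sum_{B'\in\mathrm{Chain}[M(i),B]} c^{\,1+\mathrm{brank}(i,B')}$.
   Context: Let $U$ be a finite ground set with weight function $w:U\to\mathbb{R}_{\ge0}$ taking pairwise distinct values. Let $\mathcal F$ be a laminar family of subsets of $U$ (for any $A,B\in\mathcal F$: $A\subseteq B$, $B\subseteq A$, or $A\cap B=\emptyset$) with $U\in\mathcal F$; each $A\in\mathcal F$ has a positive integer capacity $\mu(A)$, with $\mu(A)<\mu(B)$ whenever $A\subsetneq B$. A set $X\subseteq U$ is independent iff $|X\cap A|\le\mu(A)$ for all $A\in\mathcal F$. For $i\in U$, $M(i)$ denotes the minimal member of $\mathcal F$ containing $i$. For $A\subseteq B$ in $\mathcal F$, $\mathrm{Chain}[A,B]$ is the sequence of all $B'\in\mathcal F$ with $A\subseteq B'\subseteq B$, ordered by inclusion from $A$ up to $B$. For $B\in\mathcal F$, $\mathrm{OPT}(B)$ is the maximum-weight independent subset of $B$, and $\mathrm{OPT}^m_{\mathrm{large}}(B)$ is the set of the $m$ largest-weight elements of $\mathrm{OPT}(B)$ (all of $\mathrm{OPT}(B)$ if it has fewer than $m$ elements). The backward rank $\mathrm{brank}(i,B)$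 is the number of elements of $\mathrm{OPT}(B)$ of weight less than $w(i)$. Standing convention of the paper: by padding $U$ with dummy elements of infinitesimal weight, one assumes $|\mathrm{OPT}(B)|=\mu(B)$ for every $B\in\mathcal F$. *)

theory Defs
  imports Complex_Main
begin

definition laminar :: "'a set set \<Rightarrow> bool" where
  "laminar F \<longleftrightarrow> (\<forall>A\<in>F. \<forall>B\<in>F. A \<subseteq> B \<or> B \<subseteq> A \<or> A \<inter> B = {})"

definition indep :: "'a set set \<Rightarrow> ('a set \<Rightarrow> nat) \<Rightarrow> 'a set \<Rightarrow> bool" where
  "indep F \<mu> X \<longleftrightarrow> (\<forall>A\<in>F. card (X \<inter> A) \<le> \<mu> A)"

definition is_OPT :: "'a set set \<Rightarrow> ('a set \<Rightarrow> nat) \<Rightarrow> ('a \<Rightarrow> real) \<Rightarrow> 'a set \<Rightarrow> 'a set \<Rightarrow> bool" where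
  "is_OPT F \<mu> w B X \<longleftrightarrow> X \<subseteq> B \<and> indep F \<mu> X \<and>
     (\<forall>Y. Y \<subseteq> B \<longrightarrow> indep F \<mu> Y \<longrightarrow> sum w Y \<le> sum w X)"

definition minset :: "'a set set \<Rightarrow> 'a \<Rightarrow> 'a set" where
  "minset F i = (THE A. A \<in> F \<and> i \<in> A \<and> (\<forall>A'\<in>F. i \<in> A' \<longrightarrow> A \<subseteq> A'))"

definition chain_between :: "'a set set \<Rightarrow> 'a set \<Rightarrow> 'a set \<Rightarrow> 'a set set" where
  "chain_between F A B = {B'\<in>F. A \<subseteq> B' \<and> B' \<subseteq> B}"

text \<open>The m largest-weight elements of a set X (all of X if |X| < m), weights distinct.\<close>
definition large :: "('a \<Rightarrow> real) \<Rightarrow> nat \<Rightarrow> 'a set \<Rightarrow> 'a set" where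
  "large w m X = {i\<in>X. card {j\<in>X. w j > w i} < m}"

definition brank :: "('a \<Rightarrow> real) \<Rightarrow> 'a set \<Rightarrow> 'a \<Rightarrow> nat" where
  "brank w OPTB i = card {j\<in>OPTB. w j < w i}"

definition csum :: "real \<Rightarrow> nat \<Rightarrow> real" where
  "csum c j = (\<Sum>t=1..j. c ^ t)"

definition gfun :: "'a set set \<Rightarrow> ('a \<Rightarrow> real) \<Rightarrow> ('a set \<Rightarrow> 'a set) \<Rightarrow> real \<Rightarrow> nat \<Rightarrow> 'a set \<Rightarrow> real" where
  "gfun F w OPT c m B = (\<Sum>i\<in>large w m (OPT B).
      \<Sum>B'\<in>chain_between F (minset F i) B. c ^ (1 + brank w (OPT B') i))"

end

theory Submission
  imports Defs
begin

text \<open>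
  Let S be the m heaviest elements of OPT(B) and A \<subseteq> B a member of the family. Heavy
  elements of OPT(A) stay in OPT(B), hence in S, so an element of S \<inter> A below r heavier
  elements of S \<inter> A has backward rank at least \<mu>(A) - r - 1 in OPT(A): level A contributes
  at most c^\<mu>(A) + ... + c^(\<mu>(A) - n + 1) to g(m,B), where n = |S \<inter> A|. These level
  bounds are summed over the laminar family by induction, splitting off a maximal set. The
  sum is controlled by one explicit function of the number of elements and the top capacity;
  it is monotone in both and superadditive in the first, and its value at (m, \<mu>(B)) is the
  claimed bound.
\<close>

definition csum_lim :: "real \<Rightarrow> real" where
  "csum_lim q = q / (1 - q)"

lemma csum_lim_mult: "q < 1 \<Longrightarrow> csum_lim q * (1 - q) = q"
  unfolding csum_lim_def by simp

lemma csum_lim_rec: "q < 1 \<Longrightarrow> csum_lim q = q + q * csum_lim q"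
  using csum_lim_mult[of q] by (simp add: algebra_simps)

lemma csum_eq_lim:
  assumes "q < 1" shows "csum q j = csum_lim q * (1 - q ^ j)"
proof (induction j)
  case 0
  then show ?case by (simp add: csum_def)
next
  case (Suc j)
  have "csum q (Suc j) = csum_lim q * (1 - q ^ j) + q ^ Suc j"
    using Suc by (simp add: csum_def)
  also have "\<dots> = csum_lim q * (1 - q ^ Suc j) + q ^ j * (q - csum_lim q * (1 - q))"
    by (simp add: algebra_simps)
  finally show ?case
    using csum_lim_mult[OF assms] by simp
qed

lemma csum_Suc_right: "csum q (Suc n) = csum q n + q ^ Suc n"
  by (simp add: csum_def)

lemma csum_Suc: "csum q (Suc n) = q * (1 + csum q n)"
proof (induction n)
  case 0
  then show ?case by (simp add: csum_def)
next
  case (Suc n)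
  have "csum q (Suc (Suc n)) = q * (1 + csum q n) + q * q ^ Suc n"
    using Suc csum_Suc_right[of q "Suc n"] by simp
  then show ?case
    by (simp add: csum_Suc_right[of q n] algebra_simps)
qed

lemma sum_power_diff_eq_csum:
  assumes "n \<le> k" shows "(\<Sum>r<n. q ^ (k - r)) = q ^ (k - n) * csum q n"
  using assms
proof (induction n)
  case 0
  then show ?case by (simp add: csum_def)
next
  case (Suc n)
  then have "k - n = Suc (k - Suc n)" by simp
  with Suc show ?case by (simp add: csum_Suc algebra_simps)
qed

lemma sum_csum_eq:
  assumes "q < 1"
  shows "(\<Sum>j=1..<Suc n. csum q j) = csum_lim q * n - csum_lim q * csum q n"
proof (induction n)
  case 0
  then show ?case by (simp add: csum_def)
next
  case (Suc n)
  have "(\<Sum>j=1..<Suc (Suc n). csum q j) = csum_lim q * n - csum_lim q * csum q n + csum q (Suc n)"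
    using Suc by simp
  also have "\<dots> = csum_lim q * Suc n - csum_lim q * csum q (Suc n)
                  + q ^ n * csum_lim q * (csum_lim q * (1 - q) - q)"
    unfolding csum_eq_lim[OF assms] by (simp add: algebra_simps)
  finally show ?case
    using csum_lim_mult[OF assms] by simp
qed

lemma csum_lim_sq_div:
  assumes "0 < q" "q < 1" shows "(csum_lim q)\<^sup>2 * (1 - q) / q = csum_lim q"
proof -
  have "(csum_lim q)\<^sup>2 * (1 - q) = csum_lim q * q"
    using csum_lim_mult[OF assms(2)] by (simp add: power2_eq_square mult.assoc)
  then show ?thesis using assms(1) by simp
qed

text \<open>
  With s = c/(1-c) this is 2 (c_1 + ... + c_(a-1)) + c_a + c_a c_(K-a) (lemma g_bound_eq).
  Writing c^(K-a) as c^K / c^a keeps it meaningful for a = K + 1, which the induction over the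
  laminar family needs when a set holds as many elements as its capacity.
\<close>
definition g_bound :: "real \<Rightarrow> nat \<Rightarrow> nat \<Rightarrow> real" where
  "g_bound q a K = 2 * csum_lim q * a - csum_lim q - (csum_lim q)\<^sup>2
      + csum_lim q * (1 + csum_lim q) * q ^ a
      + (csum_lim q)\<^sup>2 * q ^ K - (csum_lim q)\<^sup>2 * q ^ K / q ^ a"

lemma g_bound_0: "g_bound q 0 K = 0"
  unfolding g_bound_def by (simp add: algebra_simps power2_eq_square)

lemma g_bound_eq:
  assumes q: "0 < q" "q < 1" and "a \<le> K"
  shows "g_bound q a K = 2 * (\<Sum>j=1..<a. csum q j) + csum q a + csum q a * csum q (K - a)"
proof (cases a)
  case 0
  then show ?thesis by (simp add: g_bound_0 csum_def)
next
  case (Suc n)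
  define s where "s = csum_lim q"
  define x where "x = q ^ n"
  define p where "p = q ^ (K - a)"
  have qa: "q ^ a = q * x" unfolding x_def Suc by simp
  have qK: "q ^ K = p * (q * x)"
    unfolding p_def qa[symmetric] using assms by (simp flip: power_add)
  have "x > 0" unfolding x_def using q by simp
  have csum_a: "csum q a = s * (1 - q * x)"
    unfolding csum_eq_lim[OF q(2)] s_def qa by simp
  have csum_Ka: "csum q (K - a) = s * (1 - p)"
    unfolding csum_eq_lim[OF q(2)] s_def p_def by simp
  have sum_a: "(\<Sum>j=1..<a. csum q j) = s * n - s * (s * (1 - x))"
    using sum_csum_eq[OF q(2), of n] csum_eq_lim[OF q(2), of n]
    unfolding Suc s_def x_def by simp
  have "g_bound q a K = 2*s*(n+1) - s - s\<^sup>2 + s*(1+s)*(q*x) + s\<^sup>2*(p*(q*x)) - s\<^sup>2*p"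
    unfolding g_bound_def s_def[symmetric] qK qa using \<open>x > 0\<close> q by (simp add: Suc)
  also have "\<dots> = 2 * (\<Sum>j=1..<a. csum q j) + csum q a + csum q a * csum q (K - a)
      + 2 * x * s * (q + q * s - s)"
    unfolding csum_a csum_Ka sum_a by (simp add: algebra_simps power2_eq_square)
  finally show ?thesis
    using csum_lim_rec[OF q(2)] unfolding s_def by simp
qed

lemma g_bound_Suc_capacity:
  assumes q: "0 < q" "q < 1" and "a \<le> Suc K"
  shows "g_bound q a (Suc K) = q ^ (Suc K - a) * csum q a + g_bound q a K"
proof -
  define s where "s = csum_lim q"
  define p where "p = q ^ (Suc K - a)"
  define r where "r = q ^ a"
  have qK1: "q ^ Suc K = p * r"
    unfolding p_def r_def using assms by (simp flip: power_add)
  then have qK: "q ^ K = p * r / q"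
    using q by (simp add: field_simps)
  have "r > 0" unfolding r_def using q by simp
  have "g_bound q a (Suc K) - g_bound q a K = s\<^sup>2 * (1 - q) / q * p * (1 - r)"
    unfolding g_bound_def s_def[symmetric] qK qK1 r_def[symmetric]
    using \<open>r > 0\<close> q by (simp add: field_simps)
  also have "s\<^sup>2 * (1 - q) / q = s"
    using csum_lim_sq_div[OF q] unfolding s_def .
  also have "s * p * (1 - r) = p * csum q a"
    unfolding csum_eq_lim[OF q(2)] s_def r_def by simp
  finally show ?thesis
    unfolding p_def by simp
qed

lemma g_bound_superadditive:
  assumes q: "0 < q" "q < 1" and "a + b \<le> K + 1"
  shows "g_bound q a K + g_bound q b K \<le> g_bound q (a + b) K"
proof -
  define s where "s = csum_lim q"
  define x where "x = q ^ a"
  define y where "y = q ^ b"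
  define Q where "Q = q ^ K"
  have x: "0 < x" "x \<le> 1" unfolding x_def using q by (auto intro: power_le_one)
  have y: "0 < y" "y \<le> 1" unfolding y_def using q by (auto intro: power_le_one)
  have qab: "q ^ (a + b) = x * y" unfolding x_def y_def by (simp add: power_add)
  have "g_bound q a K + g_bound q b K - g_bound q (a + b) K
      = (1 - x) * (1 - y) * (s\<^sup>2 * Q / (x * y) - s * (1 + s))"
    unfolding g_bound_def s_def[symmetric] qab x_def[symmetric] y_def[symmetric] Q_def[symmetric]
    using x y by (simp add: field_simps power2_eq_square)
  also have "\<dots> \<le> 0"
  proof (rule mult_nonneg_nonpos)
    show "0 \<le> (1 - x) * (1 - y)" using x y by simp
    have "q ^ (K + 1) \<le> q ^ (a + b)" using assms by (intro power_decreasing) auto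
    then have "Q / (x * y) \<le> 1 / q"
      using x y q qab unfolding Q_def by (simp add: field_simps)
    then have "s\<^sup>2 * (Q / (x * y)) \<le> s\<^sup>2 * (1 / q)" by (intro mult_left_mono) auto
    also have "s\<^sup>2 * (1 / q) = s * (1 + s)"
      using q unfolding s_def csum_lim_def by (simp add: power2_eq_square field_simps)
    finally show "s\<^sup>2 * Q / (x * y) - s * (1 + s) \<le> 0" by simp
  qed
  finally show ?thesis by simp
qed

lemma g_bound_Suc_le:
  assumes q: "0 < q" "q < 1" and "a \<le> K"
  shows "g_bound q a K \<le> g_bound q (Suc a) K"
proof -
  define s where "s = csum_lim q"
  define x where "x = q ^ a"
  define Q where "Q = q ^ K"
  have "s \<ge> 0" unfolding s_def csum_lim_def using q by simp
  have x: "0 < x" "x \<le> 1" unfolding x_def using q by (auto intro: power_le_one)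
  have "Q \<le> x" unfolding Q_def x_def using assms by (intro power_decreasing) auto
  have "g_bound q (Suc a) K - g_bound q a K
      = 2 * s - s * (1 + s) * (1 - q) * x - s\<^sup>2 * (1 - q) / q * (Q / x)"
    unfolding g_bound_def s_def[symmetric] x_def[symmetric] Q_def[symmetric] power_Suc
    using x q by (simp add: field_simps power2_eq_square)
  also have "s * (1 + s) * (1 - q) = s"
  proof -
    have "s * (1 + s) * (1 - q) = (s * (1 - q)) * (1 + s)" by (simp only: mult_ac)
    also have "\<dots> = q * (1 + s)" using csum_lim_mult[OF q(2)] unfolding s_def by simp
    also have "\<dots> = s" using csum_lim_rec[OF q(2)] unfolding s_def by (simp add: algebra_simps)
    finally show ?thesis .
  qed
  also have "s\<^sup>2 * (1 - q) / q = s"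
    using csum_lim_sq_div[OF q] unfolding s_def .
  finally have "g_bound q (Suc a) K - g_bound q a K = s * (1 - x) + s * (1 - Q / x)"
    by (simp add: algebra_simps)
  moreover have "s * (1 - x) \<ge> 0" "s * (1 - Q / x) \<ge> 0"
    using \<open>s \<ge> 0\<close> x \<open>Q \<le> x\<close> by auto
  ultimately show ?thesis by simp
qed

lemma g_bound_mono:
  assumes q: "0 < q" "q < 1" and "a \<le> b" "b \<le> K + 1"
  shows "g_bound q a K \<le> g_bound q b K"
  using assms(3,4)
proof (induction b rule: dec_induct)
  case base
  then show ?case by simp
next
  case (step b)
  then show ?case using g_bound_Suc_le[OF q, of b K] by simp
qed

lemma g_bound_mono_capacity:
  assumes q: "0 < q" "q < 1" and "K \<le> K'"
  shows "g_bound q a K \<le> g_bound q a K'"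
  using assms(3)
proof (induction K' rule: dec_induct)
  case base
  then show ?case by simp
next
  case (step K')
  define s where "s = csum_lim q"
  define x where "x = q ^ a"
  define Q where "Q = q ^ K'"
  have x: "0 < x" "x \<le> 1" unfolding x_def using q by (auto intro: power_le_one)
  have "Q > 0" unfolding Q_def using q by simp
  have "g_bound q a (Suc K') - g_bound q a K' = s\<^sup>2 * Q * (1 - q) * (1 / x - 1)"
    unfolding g_bound_def s_def[symmetric] x_def[symmetric] Q_def[symmetric] power_Suc
    using x q by (simp add: field_simps power2_eq_square)
  also have "\<dots> \<ge> 0" using x \<open>Q > 0\<close> q by simp
  finally show ?case using step.IH by simp
qed

lemma card_heavier_bij:
  fixes w :: "'a \<Rightarrow> real"
  assumes "finite T" "inj_on w T"
  shows "bij_betw (\<lambda>i. card {j\<in>T. w i < w j}) T {..<card T}"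
proof -
  let ?r = "\<lambda>i. card {j\<in>T. w i < w j}"
  have r_less: "?r j < ?r i" if "i \<in> T" "j \<in> T" "w i < w j" for i j
    by (rule psubset_card_mono) (use assms(1) that in auto)
  have inj: "inj_on ?r T"
  proof (rule inj_onI)
    fix i j assume ij: "i \<in> T" "j \<in> T" "?r i = ?r j"
    show "i = j"
    proof (rule ccontr)
      assume "i \<noteq> j"
      then have "w i \<noteq> w j" using assms(2) ij by (auto dest: inj_onD)
      then show False using r_less[of i j] r_less[of j i] ij by linarith
    qed
  qed
  have "?r i < card T" if "i \<in> T" for i
    by (rule psubset_card_mono) (use assms(1) that in auto)
  then have "?r ` T \<subseteq> {..<card T}" by auto
  moreover have "card (?r ` T) = card {..<card T}"
    using card_image[OF inj] by simp
  ultimately have "?r ` T = {..<card T}" by (intro card_subset_eq) auto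
  with inj show ?thesis unfolding bij_betw_def by simp
qed

lemma large_subset: "large w m X \<subseteq> X"
  unfolding large_def by auto

lemma card_large_le:
  assumes "finite X" "inj_on w X" shows "card (large w m X) \<le> m"
proof -
  let ?r = "\<lambda>i. card {j\<in>X. w i < w j}"
  have "inj_on ?r X"
    using card_heavier_bij[OF assms] by (simp add: bij_betw_def)
  then have "inj_on ?r (large w m X)"
    using large_subset by (rule inj_on_subset)
  moreover have "?r ` large w m X \<subseteq> {..<m}"
    unfolding large_def by auto
  ultimately show ?thesis
    using card_inj_on_le[of ?r "large w m X" "{..<m}"] by simp
qed

lemma large_upward_closed:
  assumes "finite X" "i \<in> large w m X" "j \<in> X" "w i < w j"
  shows "j \<in> large w m X"
proof -
  have "card {l\<in>X. w j < w l} \<le> card {l\<in>X. w i < w l}"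
    using assms by (intro card_mono) auto
  with assms show ?thesis unfolding large_def by auto
qed

lemma laminar_subset: "laminar F \<Longrightarrow> H \<subseteq> F \<Longrightarrow> laminar H"
  unfolding laminar_def by blast

lemma laminar_maximal_decomposition:
  assumes "laminar H" "finite H" "H \<noteq> {}" "{} \<notin> H"
  obtains R Hin Hout where "H = insert R (Hin \<union> Hout)" "R \<notin> Hin \<union> Hout" "Hin \<inter> Hout = {}"
    "\<forall>A\<in>Hin. A \<subset> R" "\<forall>A\<in>Hout. A \<inter> R = {}" "card Hin < card H" "card Hout < card H"
proof -
  obtain R where R: "R \<in> H" "\<forall>A\<in>H. R \<subseteq> A \<longrightarrow> A = R"
    using finite_has_maximal[OF assms(2,3)] by blast
  define Hin where "Hin = {A\<in>H. A \<subset> R}"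
  define Hout where "Hout = {A\<in>H. A \<inter> R = {}}"
  have "A = R \<or> A \<subset> R \<or> A \<inter> R = {}" if "A \<in> H" for A
  proof -
    have "A \<subseteq> R \<or> R \<subseteq> A \<or> A \<inter> R = {}"
      using assms(1) R(1) that unfolding laminar_def by blast
    then show ?thesis using R(2) that by auto
  qed
  then have H: "H = insert R (Hin \<union> Hout)"
    using R(1) unfolding Hin_def Hout_def by auto
  moreover have R_notin: "R \<notin> Hin \<union> Hout"
    using assms(4) R(1) unfolding Hin_def Hout_def by auto
  moreover have "A = {}" if "A \<subset> R" "A \<inter> R = {}" for A
    using that by blast
  then have "Hin \<inter> Hout = {}"
    using assms(4) unfolding Hin_def Hout_def by auto
  moreover have "\<forall>A\<in>Hin. A \<subset> R" "\<forall>A\<in>Hout. A \<inter> R = {}"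
    unfolding Hin_def Hout_def by auto
  moreover have "finite (Hin \<union> Hout)" using H assms(2) by (metis finite_insert)
  then have "card Hin < card H" "card Hout < card H"
    using H R_notin by (simp_all add: card_mono le_imp_less_Suc)
  ultimately show ?thesis by (rule that)
qed

lemma indep_insert_tight:
  assumes "indep F \<mu> X" "\<not> indep F \<mu> (insert x X)" "finite X" "x \<notin> X"
  shows "\<exists>D\<in>F. x \<in> D \<and> card (X \<inter> D) = \<mu> D"
proof -
  obtain D where D: "D \<in> F" "\<mu> D < card (insert x X \<inter> D)"
    using assms(2) unfolding indep_def by (auto simp: not_le)
  have "x \<in> D"
  proof (rule ccontr)
    assume "x \<notin> D"
    then have "insert x X \<inter> D = X \<inter> D" by auto
    with D assms(1) show False unfolding indep_def by auto
  qed
  then have "card (insert x X \<inter> D) = Suc (card (X \<inter> D))"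
    using assms(3,4) by simp
  with D assms(1) have "card (X \<inter> D) = \<mu> D"
    unfolding indep_def by fastforce
  with D \<open>x \<in> D\<close> show ?thesis by blast
qed

lemma indep_exchange:
  assumes "indep F \<mu> X" "finite X" "x \<notin> X" "y \<in> X"
    and slack: "\<And>E. E \<in> F \<Longrightarrow> x \<in> E \<Longrightarrow> y \<notin> E \<Longrightarrow> card (X \<inter> E) < \<mu> E"
  shows "indep F \<mu> (insert x (X - {y}))"
  unfolding indep_def
proof
  fix E assume E: "E \<in> F"
  have X_E: "card (X \<inter> E) \<le> \<mu> E" using assms(1) E unfolding indep_def by blast
  show "card (insert x (X - {y}) \<inter> E) \<le> \<mu> E"
  proof (cases "x \<in> E")
    case False
    then have "card (insert x (X - {y}) \<inter> E) \<le> card (X \<inter> E)"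
      using assms(2) by (intro card_mono) auto
    with X_E show ?thesis by simp
  next
    case True
    have "card (insert x (X - {y}) \<inter> E) \<le> card (insert x (X \<inter> E - {y}))"
      using assms(2) by (intro card_mono) auto
    also have "\<dots> = Suc (card (X \<inter> E - {y}))"
      using assms(2,3) by simp
    also have "\<dots> \<le> \<mu> E"
    proof (cases "y \<in> E")
      case True
      then have "Suc (card (X \<inter> E - {y})) = card (X \<inter> E)"
        using assms(2,4) card_Suc_Diff1[of "X \<inter> E" y] by simp
      with X_E show ?thesis by simp
    next
      case False
      then have "X \<inter> E - {y} = X \<inter> E" by auto
      with slack[OF E True False] show ?thesis by simp
    qed
    finally show ?thesis .
  qed
qed

lemma indep_subset:
  assumes "indep F \<mu> Y" "finite Y" "X \<subseteq> Y" shows "indep F \<mu> X"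
  unfolding indep_def
proof
  fix A assume "A \<in> F"
  have "card (X \<inter> A) \<le> card (Y \<inter> A)" using assms(2,3) by (intro card_mono) auto
  also have "\<dots> \<le> \<mu> A" using assms(1) \<open>A \<in> F\<close> unfolding indep_def by blast
  finally show "card (X \<inter> A) \<le> \<mu> A" .
qed

lemma large_indep:
  assumes "indep F \<mu> X" "finite X" shows "indep F \<mu> (large w m X)"
  using indep_subset[OF assms large_subset] .

lemma tight_saturated:
  assumes "indep F \<mu> Y" "finite Y" "C \<in> F" "finite X" "card (X \<inter> C) = \<mu> C"
    and "x \<in> C" "x \<notin> X" "X \<inter> C \<subseteq> Y"
  shows "x \<notin> Y"
proof
  assume "x \<in> Y"
  then have "insert x (X \<inter> C) \<subseteq> Y \<inter> C" using assms(6,8) by auto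
  then have "card (insert x (X \<inter> C)) \<le> card (Y \<inter> C)"
    using assms(2) by (intro card_mono) auto
  also have "\<dots> \<le> \<mu> C" using assms(1,3) unfolding indep_def by blast
  finally show False using assms(4,5,7) by simp
qed

definition level_bound :: "real \<Rightarrow> ('a set \<Rightarrow> nat) \<Rightarrow> 'a set \<Rightarrow> 'a set \<Rightarrow> real" where
  "level_bound c \<mu> S A = c ^ (\<mu> A - card (S \<inter> A)) * csum c (card (S \<inter> A))"

lemma level_bound_add_le:
  assumes c: "0 < c" "c < 1" and "0 < \<mu> R" "card (S \<inter> R) \<le> \<mu> R" "\<mu> R \<le> K"
    and "X \<le> g_bound c (card (S \<inter> R)) (\<mu> R - 1)"
  shows "level_bound c \<mu> S R + X \<le> g_bound c (card (S \<inter> R)) K"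
proof -
  have "level_bound c \<mu> S R + X \<le> level_bound c \<mu> S R + g_bound c (card (S \<inter> R)) (\<mu> R - 1)"
    using assms(6) by simp
  also have "\<dots> = g_bound c (card (S \<inter> R)) (\<mu> R)"
    using g_bound_Suc_capacity[OF c, of "card (S \<inter> R)" "\<mu> R - 1"] assms(3,4)
    unfolding level_bound_def by simp
  also have "\<dots> \<le> g_bound c (card (S \<inter> R)) K"
    using g_bound_mono_capacity[OF c assms(5)] .
  finally show ?thesis .
qed

locale laminar_opt =
  fixes U :: "'a set" and w :: "'a \<Rightarrow> real" and F :: "'a set set"
    and \<mu> :: "'a set \<Rightarrow> nat" and OPT :: "'a set \<Rightarrow> 'a set"
  assumes finite_U: "finite U" and inj_w: "inj_on w U" and laminar_F: "laminar F"
    and U_in_F: "U \<in> F" and F_subset: "A \<in> F \<Longrightarrow> A \<subseteq> U"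
    and mu_pos: "A \<in> F \<Longrightarrow> 0 < \<mu> A"
    and mu_strict_mono: "A \<in> F \<Longrightarrow> A' \<in> F \<Longrightarrow> A \<subset> A' \<Longrightarrow> \<mu> A < \<mu> A'"
    and OPT_optimal: "A \<in> F \<Longrightarrow> is_OPT F \<mu> w A (OPT A)"
    and card_OPT: "A \<in> F \<Longrightarrow> card (OPT A) = \<mu> A"
begin

lemma finite_F: "finite F"
proof -
  have "F \<subseteq> Pow U" using F_subset by blast
  then show ?thesis using finite_U by (simp add: finite_subset)
qed

lemma finite_member: "A \<in> F \<Longrightarrow> finite A"
  using F_subset finite_U finite_subset by blast

lemma OPT_subset: "A \<in> F \<Longrightarrow> OPT A \<subseteq> A"
  using OPT_optimal unfolding is_OPT_def by blast

lemma OPT_indep: "A \<in> F \<Longrightarrow> indep F \<mu> (OPT A)"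
  using OPT_optimal unfolding is_OPT_def by blast

lemma OPT_max: "A \<in> F \<Longrightarrow> Y \<subseteq> A \<Longrightarrow> indep F \<mu> Y \<Longrightarrow> sum w Y \<le> sum w (OPT A)"
  using OPT_optimal unfolding is_OPT_def by blast

lemma finite_OPT: "A \<in> F \<Longrightarrow> finite (OPT A)"
  using OPT_subset finite_member finite_subset by blast

lemma laminarD: "A \<in> F \<Longrightarrow> B \<in> F \<Longrightarrow> A \<subseteq> B \<or> B \<subseteq> A \<or> A \<inter> B = {}"
  using laminar_F unfolding laminar_def by blast

lemma empty_notin_F: "{} \<notin> F"
  using card_OPT mu_pos OPT_subset by fastforce

lemma inj_w_on: "X \<subseteq> U \<Longrightarrow> inj_on w X"
  using inj_w by (rule inj_on_subset)

text \<open>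
  Exchange argument: by minimality of C, swapping x for a lighter y \<in> OPT A \<inter> C keeps
  independence and increases the weight.
\<close>
lemma minimal_tight_set_heavier:
  assumes A: "A \<in> F" "x \<in> A" "x \<notin> OPT A"
    and C: "C \<in> F" "x \<in> C" "card (OPT A \<inter> C) = \<mu> C"
    and minimal: "\<And>E. E \<in> F \<Longrightarrow> x \<in> E \<Longrightarrow> E \<subset> C \<Longrightarrow> card (OPT A \<inter> E) < \<mu> E"
    and y: "y \<in> OPT A \<inter> C"
  shows "w x < w y"
proof (rule ccontr)
  assume "\<not> w x < w y"
  moreover have "w x \<noteq> w y"
  proof
    assume "w x = w y"
    moreover have "x \<in> U" "y \<in> U" using A y F_subset OPT_subset by blast+
    ultimately have "x = y" using inj_onD[OF inj_w] by blast
    then show False using A(3) y by blast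
  qed
  ultimately have "w y < w x" by simp
  let ?Z = "insert x (OPT A - {y})"
  have "indep F \<mu> ?Z"
  proof (rule indep_exchange[OF OPT_indep[OF A(1)] finite_OPT[OF A(1)] A(3)])
    show "y \<in> OPT A" using y by blast
    fix E assume E: "E \<in> F" "x \<in> E" "y \<notin> E"
    have "E \<subseteq> C \<or> C \<subseteq> E \<or> E \<inter> C = {}" using laminarD[OF E(1) C(1)] .
    then have "E \<subset> C" using E(2,3) C(2) y by auto
    then show "card (OPT A \<inter> E) < \<mu> E" using minimal E by blast
  qed
  moreover have "?Z \<subseteq> A" using A OPT_subset by auto
  ultimately have "sum w ?Z \<le> sum w (OPT A)" using OPT_max[OF A(1)] by blast
  moreover have "sum w ?Z = w x + (sum w (OPT A) - w y)"
    using finite_OPT[OF A(1)] A(3) y by (simp add: sum_diff1)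
  ultimately show False using \<open>w y < w x\<close> by simp
qed

lemma tight_set_above:
  assumes A: "A \<in> F" "x \<in> A" "x \<notin> OPT A"
  obtains C where "C \<in> F" "x \<in> C" "C \<subseteq> A" "card (OPT A \<inter> C) = \<mu> C"
    "\<forall>y\<in>OPT A \<inter> C. w x < w y"
proof -
  let ?X = "OPT A"
  have "insert x ?X \<inter> A = insert x ?X" using A OPT_subset by blast
  then have "card (insert x ?X \<inter> A) = \<mu> A + 1"
    using A finite_OPT card_OPT by simp
  then have "\<not> indep F \<mu> (insert x ?X)"
    using A(1) unfolding indep_def by (metis Suc_eq_plus1 not_less_eq_eq order_refl)
  then have "\<exists>D\<in>F. x \<in> D \<and> card (?X \<inter> D) = \<mu> D"
    using indep_insert_tight[OF OPT_indep[OF A(1)] _ finite_OPT[OF A(1)] A(3)] by blast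
  then have "{D\<in>F. x \<in> D \<and> card (?X \<inter> D) = \<mu> D} \<noteq> {}" by blast
  with finite_has_minimal[OF _ this] obtain C
    where "C \<in> {D\<in>F. x \<in> D \<and> card (?X \<inter> D) = \<mu> D}" and
    C_min: "\<forall>E\<in>{D\<in>F. x \<in> D \<and> card (?X \<inter> D) = \<mu> D}. E \<subseteq> C \<longrightarrow> E = C"
    using finite_F by auto
  then have C: "C \<in> F" "x \<in> C" "card (?X \<inter> C) = \<mu> C" by auto
  have minimal: "E = C" if "E \<in> F" "x \<in> E" "card (?X \<inter> E) = \<mu> E" "E \<subseteq> C" for E
    using C_min that by blast
  have "C \<subseteq> A"
  proof -
    have "\<not> A \<subset> C"
    proof
      assume "A \<subset> C"
      then have "\<mu> A < \<mu> C" using mu_strict_mono A(1) C(1) by blast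
      moreover have "card (?X \<inter> C) \<le> card ?X" using finite_OPT[OF A(1)] by (intro card_mono) auto
      ultimately show False using C(3) card_OPT[OF A(1)] by simp
    qed
    moreover have "C \<inter> A \<noteq> {}" using A(2) C(2) by blast
    ultimately show ?thesis using laminarD[OF C(1) A(1)] by blast
  qed
  moreover have "\<forall>y\<in>?X \<inter> C. w x < w y"
  proof
    fix y assume y: "y \<in> ?X \<inter> C"
    have "card (?X \<inter> E) < \<mu> E" if E: "E \<in> F" "x \<in> E" "E \<subset> C" for E
    proof -
      have "card (?X \<inter> E) \<le> \<mu> E" using OPT_indep[OF A(1)] E(1) unfolding indep_def by blast
      moreover have "card (?X \<inter> E) \<noteq> \<mu> E" using minimal[OF E(1,2)] E(3) by blast
      ultimately show ?thesis by simp
    qed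
    then show "w x < w y"
      using minimal_tight_set_heavier[OF A C _ y] by blast
  qed
  ultimately show ?thesis using that C by blast
qed

lemma OPT_nested:
  assumes B': "B' \<in> F" and B: "B \<in> F" "B' \<subseteq> B" and "x \<in> B'"
  shows "(x \<in> OPT B \<longrightarrow> x \<in> OPT B') \<and>
    (x \<in> OPT B' \<longrightarrow> x \<notin> OPT B \<longrightarrow> (\<forall>i\<in>OPT B \<inter> B'. w x < w i))"
  using assms(4)
proof (induction "card {z\<in>U. w x < w z}" arbitrary: x rule: less_induct)
  case less
  have IH: "(y \<in> OPT B \<longrightarrow> y \<in> OPT B') \<and>
      (y \<in> OPT B' \<longrightarrow> y \<notin> OPT B \<longrightarrow> (\<forall>i\<in>OPT B \<inter> B'. w y < w i))"
    if "y \<in> B'" "w x < w y" for y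
  proof (rule less.hyps[OF _ that(1)])
    have "y \<in> U" using that(1) B' F_subset by blast
    then show "card {z\<in>U. w y < w z} < card {z\<in>U. w x < w z}"
      using that(2) finite_U by (intro psubset_card_mono) auto
  qed
  have lighter: "w x < w i" if x: "x \<in> OPT B'" "x \<notin> OPT B" and i: "i \<in> OPT B \<inter> B'" for i
  proof -
    obtain C where C: "C \<in> F" "x \<in> C" "C \<subseteq> B" "card (OPT B \<inter> C) = \<mu> C"
      and heavier: "\<forall>y\<in>OPT B \<inter> C. w x < w y"
      using tight_set_above[OF B(1) _ x(2)] less.prems B(2) by blast
    have "\<not> C \<subseteq> B'"
    proof
      assume "C \<subseteq> B'"
      then have "OPT B \<inter> C \<subseteq> OPT B'" using IH heavier by blast
      then have "x \<notin> OPT B'"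
        using tight_saturated[OF OPT_indep[OF B'] finite_OPT[OF B'] C(1) finite_OPT[OF B(1)] C(4) C(2) x(2)]
        by blast
      with x(1) show False by simp
    qed
    then have "B' \<subseteq> C" using laminarD[OF C(1) B'] C(2) less.prems by blast
    with heavier i show ?thesis by blast
  qed
  have stays: "x \<in> OPT B'" if x: "x \<in> OPT B"
  proof (rule ccontr)
    assume x': "x \<notin> OPT B'"
    obtain C where C: "C \<in> F" "x \<in> C" "C \<subseteq> B'" "card (OPT B' \<inter> C) = \<mu> C"
      and heavier: "\<forall>y\<in>OPT B' \<inter> C. w x < w y"
      using tight_set_above[OF B' less.prems x'] by blast
    have "OPT B' \<inter> C \<subseteq> OPT B"
    proof
      fix y assume y: "y \<in> OPT B' \<inter> C"
      show "y \<in> OPT B"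
      proof (rule ccontr)
        assume "y \<notin> OPT B"
        then have "w y < w x" using IH[of y] y C(3) heavier x less.prems by blast
        moreover have "w x < w y" using heavier y by blast
        ultimately show False by simp
      qed
    qed
    then have "x \<notin> OPT B"
      using tight_saturated[OF OPT_indep[OF B(1)] finite_OPT[OF B(1)] C(1) finite_OPT[OF B'] C(4) C(2) x']
      by blast
    with x show False by simp
  qed
  show ?case using lighter stays by blast
qed

lemma OPT_upward_closed:
  assumes "B' \<in> F" "B \<in> F" "B' \<subseteq> B" "j \<in> OPT B'" "i \<in> OPT B \<inter> B'" "w i < w j"
  shows "j \<in> OPT B"
proof (rule ccontr)
  assume "j \<notin> OPT B"
  moreover have "j \<in> B'" using assms(1,4) OPT_subset by blast
  ultimately have "w j < w i" using OPT_nested[OF assms(1-3)] assms(4,5) by blast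
  with assms(6) show False by simp
qed

lemma minset_least:
  assumes "i \<in> U"
  shows "minset F i \<in> F \<and> i \<in> minset F i \<and> (\<forall>A\<in>F. i \<in> A \<longrightarrow> minset F i \<subseteq> A)"
proof -
  have "{A\<in>F. i \<in> A} \<noteq> {}" using U_in_F assms by blast
  with finite_has_minimal[OF _ this] obtain M where M: "M \<in> F" "i \<in> M"
    and M_min: "\<forall>A\<in>{A\<in>F. i \<in> A}. A \<subseteq> M \<longrightarrow> A = M"
    using finite_F by auto
  have "M \<subseteq> A" if "A \<in> F" "i \<in> A" for A
    using laminarD[OF M(1) that(1)] M_min M(2) that by blast
  then have least: "M \<in> F \<and> i \<in> M \<and> (\<forall>A\<in>F. i \<in> A \<longrightarrow> M \<subseteq> A)"
    using M by blast
  then have "minset F i = M"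
    unfolding minset_def by (rule the_equality) (use least in blast)
  with least show ?thesis by simp
qed

lemma chain_between_minset:
  assumes "i \<in> U" shows "chain_between F (minset F i) B = {A\<in>F. A \<subseteq> B \<and> i \<in> A}"
  using minset_least[OF assms] unfolding chain_between_def by blast

lemma sum_level_bound_le:
  assumes c: "0 < c" "c < 1" and S: "finite S" "indep F \<mu> S"
  shows "H \<subseteq> F \<Longrightarrow> \<forall>A\<in>H. \<mu> A \<le> K \<Longrightarrow> card (S \<inter> \<Union>H) \<le> K + 1 \<Longrightarrow>
    (\<Sum>A\<in>H. level_bound c \<mu> S A) \<le> g_bound c (card (S \<inter> \<Union>H)) K"
proof (induction "card H" arbitrary: H K rule: less_induct)
  case less
  show ?case
  proof (cases "H = {}")
    case True
    then show ?thesis by (simp add: g_bound_0)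
  next
    case False
    have "laminar H" "finite H" "{} \<notin> H"
      using less.prems(1) laminar_subset[OF laminar_F] finite_subset[OF _ finite_F] empty_notin_F
      by blast+
    then obtain R Hin Hout where split: "H = insert R (Hin \<union> Hout)" "R \<notin> Hin \<union> Hout"
      "Hin \<inter> Hout = {}" and Hin: "\<forall>A\<in>Hin. A \<subset> R" and Hout: "\<forall>A\<in>Hout. A \<inter> R = {}"
      and card_lt: "card Hin < card H" "card Hout < card H"
      using laminar_maximal_decomposition False by blast
    have RF: "R \<in> F" and "Hin \<subseteq> F" "Hout \<subseteq> F" using split(1) less.prems(1) by blast+
    define mR where "mR = card (S \<inter> R)"
    have "mR \<le> \<mu> R" using S(2) RF unfolding mR_def indep_def by blast
    have "\<mu> R \<le> K" using less.prems(2) split(1) by blast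
    have "card (S \<inter> \<Union>Hin) \<le> mR"
      unfolding mR_def using Hin S(1) by (intro card_mono) auto
    have "(\<Sum>A\<in>Hin. level_bound c \<mu> S A) \<le> g_bound c (card (S \<inter> \<Union>Hin)) (\<mu> R - 1)"
    proof (rule less.hyps[OF card_lt(1)])
      show "Hin \<subseteq> F" by fact
      show "\<forall>A\<in>Hin. \<mu> A \<le> \<mu> R - 1"
        using mu_strict_mono[OF _ RF] Hin \<open>Hin \<subseteq> F\<close> by fastforce
      show "card (S \<inter> \<Union>Hin) \<le> \<mu> R - 1 + 1"
        using \<open>card (S \<inter> \<Union>Hin) \<le> mR\<close> \<open>mR \<le> \<mu> R\<close> by simp
    qed
    also have "\<dots> \<le> g_bound c mR (\<mu> R - 1)"
      using g_bound_mono[OF c \<open>card (S \<inter> \<Union>Hin) \<le> mR\<close>] \<open>mR \<le> \<mu> R\<close> by simp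
    finally have inner: "level_bound c \<mu> S R + (\<Sum>A\<in>Hin. level_bound c \<mu> S A) \<le> g_bound c mR K"
      using level_bound_add_le[of c \<mu> R, OF c mu_pos[OF RF]] \<open>mR \<le> \<mu> R\<close> \<open>\<mu> R \<le> K\<close>
      unfolding mR_def by blast
    have "S \<inter> \<Union>H = (S \<inter> R) \<union> (S \<inter> \<Union>Hout)" "(S \<inter> R) \<inter> (S \<inter> \<Union>Hout) = {}"
      using split(1) Hin Hout by auto
    then have card_H: "card (S \<inter> \<Union>H) = mR + card (S \<inter> \<Union>Hout)"
      unfolding mR_def using S(1) by (simp add: card_Un_disjoint)
    have outer: "(\<Sum>A\<in>Hout. level_bound c \<mu> S A) \<le> g_bound c (card (S \<inter> \<Union>Hout)) K"
    proof (rule less.hyps[OF card_lt(2)])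
      show "Hout \<subseteq> F" by fact
      show "\<forall>A\<in>Hout. \<mu> A \<le> K" using less.prems(2) split(1) by blast
      show "card (S \<inter> \<Union>Hout) \<le> K + 1" using less.prems(3) card_H by simp
    qed
    have "(\<Sum>A\<in>H. level_bound c \<mu> S A)
        = level_bound c \<mu> S R + (\<Sum>A\<in>Hin. level_bound c \<mu> S A) + (\<Sum>A\<in>Hout. level_bound c \<mu> S A)"
      using split \<open>finite H\<close> by (simp add: sum.union_disjoint)
    also have "\<dots> \<le> g_bound c mR K + g_bound c (card (S \<inter> \<Union>Hout)) K"
      using inner outer by simp
    also have "\<dots> \<le> g_bound c (card (S \<inter> \<Union>H)) K"
      using g_bound_superadditive[OF c] less.prems(3) card_H by simp
    finally show ?thesis .
  qed
qed

lemma capacity_le_brank_heavier: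
  assumes AB: "A \<in> F" "B \<in> F" "A \<subseteq> B" and i: "i \<in> large w m (OPT B) \<inter> A"
  shows "\<mu> A \<le> brank w (OPT A) i + 1 + card {j\<in>large w m (OPT B) \<inter> A. w i < w j}"
proof -
  let ?S = "large w m (OPT B)" and ?Y = "OPT A"
  have "i \<in> U" using i F_subset[OF AB(1)] by blast
  have heavier: "{j\<in>?Y. w i < w j} \<subseteq> {j\<in>?S \<inter> A. w i < w j}"
  proof
    fix j assume j: "j \<in> {j\<in>?Y. w i < w j}"
    have "i \<in> OPT B \<inter> A" using i large_subset[of w m "OPT B"] by blast
    with j have "j \<in> OPT B" using OPT_upward_closed[OF AB] by blast
    then have "j \<in> ?S" using large_upward_closed[OF finite_OPT[OF AB(2)]] i j by blast
    with j OPT_subset[OF AB(1)] show "j \<in> {j\<in>?S \<inter> A. w i < w j}" by blast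
  qed
  have "?Y \<subseteq> {j\<in>?Y. w j < w i} \<union> {i} \<union> {j\<in>?Y. w i < w j}"
  proof
    fix j assume "j \<in> ?Y"
    moreover have "j \<in> U" using \<open>j \<in> ?Y\<close> OPT_subset[OF AB(1)] F_subset[OF AB(1)] by blast
    ultimately have "j = i \<or> w j \<noteq> w i" using \<open>i \<in> U\<close> inj_onD[OF inj_w, of j i] by blast
    with \<open>j \<in> ?Y\<close> show "j \<in> {j\<in>?Y. w j < w i} \<union> {i} \<union> {j\<in>?Y. w i < w j}" by auto
  qed
  then have "card ?Y \<le> card ({j\<in>?Y. w j < w i} \<union> {i} \<union> {j\<in>?Y. w i < w j})"
    using finite_OPT[OF AB(1)] by (intro card_mono) auto
  then have "\<mu> A \<le> card ({j\<in>?Y. w j < w i} \<union> {i} \<union> {j\<in>?Y. w i < w j})"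
    using card_OPT[OF AB(1)] by simp
  also have "\<dots> \<le> card ({j\<in>?Y. w j < w i} \<union> {i}) + card {j\<in>?Y. w i < w j}"
    by (rule card_Un_le)
  also have "\<dots> \<le> card {j\<in>?Y. w j < w i} + 1 + card {j\<in>?Y. w i < w j}"
    using card_Un_le[of "{j\<in>?Y. w j < w i}" "{i}"] by simp
  also have "\<dots> \<le> brank w ?Y i + 1 + card {j\<in>?S \<inter> A. w i < w j}"
    using card_mono[OF _ heavier] finite_member[OF AB(1)] unfolding brank_def by simp
  finally show ?thesis .
qed

lemma sum_chain_terms_le_level_bound:
  assumes c: "0 < c" "c < 1" and AB: "A \<in> F" "B \<in> F" "A \<subseteq> B"
  shows "(\<Sum>i\<in>large w m (OPT B) \<inter> A. c ^ (1 + brank w (OPT A) i))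
    \<le> level_bound c \<mu> (large w m (OPT B)) A"
proof -
  let ?T = "large w m (OPT B) \<inter> A"
  let ?r = "\<lambda>i. card {j\<in>?T. w i < w j}"
  have "finite ?T" using finite_member[OF AB(1)] by simp
  have "inj_on w ?T" using F_subset[OF AB(1)] by (intro inj_w_on) blast
  have "card ?T \<le> \<mu> A"
    using large_indep[OF OPT_indep finite_OPT] AB unfolding indep_def by blast
  have "(\<Sum>i\<in>?T. c ^ (1 + brank w (OPT A) i)) \<le> (\<Sum>i\<in>?T. c ^ (\<mu> A - ?r i))"
  proof (rule sum_mono)
    fix i assume "i \<in> ?T"
    then have "\<mu> A - ?r i \<le> 1 + brank w (OPT A) i"
      using capacity_le_brank_heavier[OF AB] by fastforce
    then show "c ^ (1 + brank w (OPT A) i) \<le> c ^ (\<mu> A - ?r i)"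
      using c by (intro power_decreasing) auto
  qed
  also have "\<dots> = (\<Sum>k<card ?T. c ^ (\<mu> A - k))"
    using sum.reindex_bij_betw[OF card_heavier_bij[OF \<open>finite ?T\<close> \<open>inj_on w ?T\<close>]] .
  also have "\<dots> = level_bound c \<mu> (large w m (OPT B)) A"
    using sum_power_diff_eq_csum[OF \<open>card ?T \<le> \<mu> A\<close>] unfolding level_bound_def by simp
  finally show ?thesis .
qed

lemma gfun_eq_sum_levels:
  assumes "B \<in> F"
  shows "gfun F w OPT c m B
    = (\<Sum>A\<in>{A\<in>F. A \<subseteq> B}. \<Sum>i\<in>large w m (OPT B) \<inter> A. c ^ (1 + brank w (OPT A) i))"
proof -
  let ?S = "large w m (OPT B)" and ?f = "\<lambda>i A. c ^ (1 + brank w (OPT A) i)"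
  have "?S \<subseteq> U" using large_subset[of w m "OPT B"] OPT_subset[OF assms] F_subset[OF assms] by blast
  then have "gfun F w OPT c m B = (\<Sum>i\<in>?S. \<Sum>A\<in>{A. A \<in> {A\<in>F. A \<subseteq> B} \<and> i \<in> A}. ?f i A)"
    unfolding gfun_def by (intro sum.cong refl) (simp add: chain_between_minset subset_iff)
  also have "\<dots> = (\<Sum>A\<in>{A\<in>F. A \<subseteq> B}. \<Sum>i\<in>{i. i \<in> ?S \<and> i \<in> A}. ?f i A)"
    using finite_subset[OF \<open>?S \<subseteq> U\<close> finite_U] finite_F by (intro sum.swap_restrict) auto
  finally show ?thesis by (simp add: Int_def)
qed

lemma gfun_le_g_bound:
  assumes c: "0 < c" "c < 1" and B: "B \<in> F" and m: "m \<le> \<mu> B"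
  shows "gfun F w OPT c m B \<le> g_bound c m (\<mu> B)"
proof -
  let ?S = "large w m (OPT B)" and ?G = "{A\<in>F. A \<subseteq> B}"
  have "finite ?S" using finite_OPT[OF B] large_subset finite_subset by metis
  have "inj_on w (OPT B)" using OPT_subset[OF B] F_subset[OF B] by (intro inj_w_on) blast
  then have "card ?S \<le> m" using card_large_le finite_OPT[OF B] by blast
  have "gfun F w OPT c m B \<le> (\<Sum>A\<in>?G. level_bound c \<mu> ?S A)"
    unfolding gfun_eq_sum_levels[OF B] using sum_chain_terms_le_level_bound[OF c _ B]
    by (intro sum_mono) blast
  also have "\<dots> \<le> g_bound c (card (?S \<inter> \<Union>?G)) (\<mu> B)"
  proof (rule sum_level_bound_le[OF c \<open>finite ?S\<close> large_indep[OF OPT_indep[OF B] finite_OPT[OF B]]])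
    show "\<forall>A\<in>?G. \<mu> A \<le> \<mu> B"
      using mu_strict_mono[OF _ B] by (auto simp: order.order_iff_strict)
    have "card (?S \<inter> \<Union>?G) \<le> card ?S" using \<open>finite ?S\<close> by (intro card_mono) auto
    then show "card (?S \<inter> \<Union>?G) \<le> \<mu> B + 1" using \<open>card ?S \<le> m\<close> m by simp
  qed auto
  also have "\<dots> \<le> g_bound c m (\<mu> B)"
  proof (rule g_bound_mono[OF c])
    have "card (?S \<inter> \<Union>?G) \<le> card ?S" using \<open>finite ?S\<close> by (intro card_mono) auto
    then show "card (?S \<inter> \<Union>?G) \<le> m" using \<open>card ?S \<le> m\<close> by simp
  qed (use m in simp)
  finally show ?thesis .
qed

end

theorem mainTheorem4:
  fixes U :: "'a set" and w :: "'a \<Rightarrow> real" and F :: "'a set set"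
    and \<mu> :: "'a set \<Rightarrow> nat" and OPT :: "'a set \<Rightarrow> 'a set"
    and c :: real and B :: "'a set" and m :: nat
  assumes "finite U"
    and "\<forall>i\<in>U. w i \<ge> 0"
    and "inj_on w U"
    and "laminar F" and "U \<in> F" and "\<forall>A\<in>F. A \<subseteq> U"
    and "\<forall>A\<in>F. \<mu> A > 0"
    and "\<forall>A\<in>F. \<forall>A'\<in>F. A \<subset> A' \<longrightarrow> \<mu> A < \<mu> A'"
    and "\<forall>A\<in>F. is_OPT F \<mu> w A (OPT A)"
    and "\<forall>A\<in>F. card (OPT A) = \<mu> A"
    and "0 < c" and "c < 1/2"
    and "B \<in> F" and "m \<le> \<mu> B"
  shows "gfun F w OPT c m B \<le>
    2 * (\<Sum>j=1..<m. csum c j) + csum c m + csum c m * csum c (\<mu> B - m)"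
proof -
  interpret laminar_opt U w F \<mu> OPT
    by unfold_locales (use assms in auto)
  have c: "0 < c" "c < 1" using assms(11,12) by simp_all
  have "gfun F w OPT c m B \<le> g_bound c m (\<mu> B)"
    using gfun_le_g_bound[OF c assms(13,14)] .
  also have "\<dots> = 2 * (\<Sum>j=1..<m. csum c j) + csum c m + csum c m * csum c (\<mu> B - m)"
    using g_bound_eq[OF c assms(14)] .
  finally show ?thesis .
qed

end
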